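(* Assume that for every $(s,a)$ the probability weights of $\eta_{N,\infty}^{(s,a)}=\sum_{i=1}^N p_i^{(s,a)}(\theta)\delta_{z_i}$ are differentiable in $\theta$, and set $\nabla_\theta\eta_{N,\infty}^{(s,a)}:=\sum_i\nabla_\theta p_i^{(s,a)}(\theta)\delta_{z_i}$ (similarly for $\eta_{N,\infty}^s$). Define $g_{N}(s):=\sum_{a\in\mathcal A}\nabla_\theta\pi_\theta(a\mid s)\,\eta_{N,\infty}^{(s,a)}$. Let $\tau=(s_0,a_0,c_0,s_1,a_1,c_1,\dots)$ be a random trajectory with $s_0=s$, $a_t\sim\pi_\theta(\cdot\mid s_t)$, $c_t=C(s_t,a_t)$, $s_{t+1}\sim P(\cdot\mid s_t,a_t)$, and for $t\ge1$ set $$\tilde{\mathcal B}^{\tau}_t:=\Pi_{\mathcal C}(b_{c_0,\gamma})_\#\circ\Pi_{\mathcal C}(b_{c_1,\gamma})_\#\circ\cdots\circ\Pi_{\mathcal C}(b_{c_{t-1},\gamma})_\#.$$ Then $$\nabla_\theta\eta_{N,\infty}^{s}=\mathbb E_\tau\Big[g_N(s_0)+\sum_{t=1}^{|\tau|}\tilde{\mathcal B}^{\tau}_t\,g_N(s_t)\Big],$$ where $|\tau|$ is the length of the trajectory (the sum being over all $t\ge1$ for an infinite trajectory) and all operators act linearly on ($\mathbb R^d$-valued) signed measures supported on finitely many points.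
   Context: Finite MDP with states $\mathcal S$, actions $\mathcal A$, transition kernel $P$, deterministic costs $C(s,a)\in[c_{\min},c_{\max}]$, discount $\gamma\in[0,1)$, differentiable policies $\pi_\theta$, $\theta\in\mathbb R^d$. Grid: $N\ge2$, $z_i=z_{\min}+(i-1)\frac{z_{\max}-z_{\min}}{N-1}$. Projection $\Pi_{\mathcal C}$: $\Pi_{\mathcal C}\delta_y=\delta_{z_1}$ if $y\le z_1$, $=\delta_{z_N}$ if $y>z_N$, and $=\frac{z_{i+1}-y}{z_{i+1}-z_i}\delta_{z_i}+\frac{y-z_i}{z_{i+1}-z_i}\delta_{z_{i+1}}$ if $z_i<y\le z_{i+1}$, extended linearly to finite signed combinations of Diracs. $b_{c,\gamma}(z)=c+\gamma z$ and $(b_{c,\gamma})_\#\nu(A)=\nu(b_{c,\gamma}^{-1}(A))$. The projected distributional Bellman operator is $(\Pi_{\mathcal C}\mathcal T^\pi\eta)^{(s,a)}=\Pi_{\mathcal C}\big[\sum_{s'}P(s'\mid s,a)\sum_{a'}\pi(a'\mid s')(b_{C(s,a),\gamma})_\#\eta^{(s',a')}\big]$; $\eta_{N,\infty}$ is its unique fixed point among families of distributions on $\{z_1,\dots,z_N\}$, and $\eta_{N,\infty}^s:=\sum_a\pi_\theta(a\mid s)\eta_{N,\infty}^{(s,a)}$. *)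

theory Defs
  imports "HOL-Analysis.Analysis" "HOL-Probability.Probability"
begin

definition zgrid :: "nat \<Rightarrow> real \<Rightarrow> real \<Rightarrow> nat \<Rightarrow> real" where
  "zgrid N zmin zmax i = zmin + (real i - 1) * (zmax - zmin) / (real N - 1)"

definition proj_dirac :: "nat \<Rightarrow> real \<Rightarrow> real \<Rightarrow> real \<Rightarrow> nat \<Rightarrow> real" where
  "proj_dirac N zmin zmax y j =
     (let z = zgrid N zmin zmax in
      if y \<le> z 1 then (if j = 1 then 1 else 0)
      else if z N < y then (if j = N then 1 else 0)
      else (\<Sum>i\<in>{1..<N}. if z i < y \<and> y \<le> z (Suc i) then
              (if j = i then (z (Suc i) - y) / (z (Suc i) - z i)
               else if j = Suc i then (y - z i) / (z (Suc i) - z i) else 0)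
            else 0))"

text \<open>A (signed, vector-valued) measure supported on the grid is represented by its
  weights w j at the grid points z_j, j = 1..N.  The operator
  Pi_C o (b_{c,gamma})_# applied to sum_k w_k delta_{z_k} gives
  sum_k w_k Pi_C delta_{c + gamma z_k}.\<close>
definition proj_push :: "nat \<Rightarrow> real \<Rightarrow> real \<Rightarrow> real \<Rightarrow> real \<Rightarrow> (nat \<Rightarrow> 'v::real_vector) \<Rightarrow> nat \<Rightarrow> 'v" where
  "proj_push N zmin zmax \<gamma> c w j =
     (\<Sum>k\<in>{1..N}. proj_dirac N zmin zmax (c + \<gamma> * zgrid N zmin zmax k) j *\<^sub>R w k)"

text \<open>comp_ops [c0,...,c_{t-1}] = Pi(b_{c0})_# o ... o Pi(b_{c_{t-1}})_#.\<close>
primrec comp_ops :: "nat \<Rightarrow> real \<Rightarrow> real \<Rightarrow> real \<Rightarrow> real list \<Rightarrow> (nat \<Rightarrow> 'v::real_vector) \<Rightarrow> nat \<Rightarrow> 'v" where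
  "comp_ops N zmin zmax \<gamma> [] w = w"
| "comp_ops N zmin zmax \<gamma> (c # cs) w = proj_push N zmin zmax \<gamma> c (comp_ops N zmin zmax \<gamma> cs w)"

definition dist_family :: "nat \<Rightarrow> ('s \<Rightarrow> 'a \<Rightarrow> nat \<Rightarrow> real) \<Rightarrow> bool" where
  "dist_family N \<eta> \<longleftrightarrow> (\<forall>s a. (\<forall>i. i \<notin> {1..N} \<longrightarrow> \<eta> s a i = 0) \<and>
       (\<forall>i\<in>{1..N}. 0 \<le> \<eta> s a i) \<and> (\<Sum>i\<in>{1..N}. \<eta> s a i) = 1)"

definition pbellman :: "nat \<Rightarrow> real \<Rightarrow> real \<Rightarrow> real \<Rightarrow> ('s::finite \<Rightarrow> 'a::finite \<Rightarrow> real)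
   \<Rightarrow> ('s \<Rightarrow> 'a \<Rightarrow> 's \<Rightarrow> real) \<Rightarrow> ('s \<Rightarrow> 'a \<Rightarrow> real)
   \<Rightarrow> ('s \<Rightarrow> 'a \<Rightarrow> nat \<Rightarrow> real) \<Rightarrow> 's \<Rightarrow> 'a \<Rightarrow> nat \<Rightarrow> real" where
  "pbellman N zmin zmax \<gamma> C P pol \<eta> s a =
     proj_push N zmin zmax \<gamma> (C s a)
       (\<lambda>j. \<Sum>s'\<in>UNIV. P s a s' * (\<Sum>a'\<in>UNIV. pol s' a' * \<eta> s' a' j))"

definition eta_fix :: "nat \<Rightarrow> real \<Rightarrow> real \<Rightarrow> real \<Rightarrow> ('s::finite \<Rightarrow> 'a::finite \<Rightarrow> real)
   \<Rightarrow> ('s \<Rightarrow> 'a \<Rightarrow> 's \<Rightarrow> real) \<Rightarrow> ('s \<Rightarrow> 'a \<Rightarrow> real) \<Rightarrow> 's \<Rightarrow> 'a \<Rightarrow> nat \<Rightarrow> real" where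
  "eta_fix N zmin zmax \<gamma> C P pol =
     (THE \<eta>. dist_family N \<eta> \<and> pbellman N zmin zmax \<gamma> C P pol \<eta> = \<eta>)"

definition grad :: "(real^'d \<Rightarrow> real) \<Rightarrow> real^'d \<Rightarrow> real^'d" where
  "grad f \<theta> = (\<chi> k. frechet_derivative f (at \<theta>) (axis k 1))"

end

theory Submission
  imports Defs
begin

text \<open>Differentiating the fixed-point equation \<open>\<eta> = \<Pi>\<^sub>C\<T>\<^sup>\<pi>\<eta>\<close> by the product rule shows that
  \<open>W s = \<nabla>\<^sub>\<theta>\<eta>\<^sup>s\<close> solves the affine Bellman-type equation
  \<open>W s = g\<^sub>N s + \<Sigma>\<^sub>a \<pi>(a|s) \<Pi>\<^sub>C(b\<^sub>C\<^sub>(\<^sub>s\<^sub>,\<^sub>a\<^sub>)\<^sub>,\<^sub>\<gamma>)\<^sub># \<Sigma>\<^sub>s\<^sub>' P(s'|s,a) W s'\<close>.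
  The operator \<open>\<Pi>\<^sub>C(b\<^sub>c\<^sub>,\<^sub>\<gamma>)\<^sub>#\<close> is a \<open>\<gamma>\<close>-contraction for the Cram\'er (\<open>\<ell>\<^sub>1\<close>-CDF) seminorm
  on signed measures of total mass zero, and all differences occurring here have mass zero
  (gradients of probability weights). Hence the iterates of this equation started at \<open>g\<^sub>N\<close>
  converge geometrically to \<open>W\<close>; by the Markov property the \<open>n\<close>-th iterate is the expectation
  of the trajectory sum truncated after \<open>n\<close> terms, and dominated convergence (the terms are
  bounded by a multiple of \<open>\<gamma>\<^sup>t\<close>) moves the limit inside the expectation. The same
  contraction also gives existence and uniqueness of \<open>\<eta>\<^sub>N\<^sub>,\<^sub>\<infinity>\<close>.\<close>

section \<open>Projection onto the grid\<close>

definition clip01 :: "real \<Rightarrow> real" where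
  "clip01 x = max 0 (min 1 x)"

lemma sum_clip01_shift:
  "(\<Sum>k\<in>{1..n}. clip01 (real k - u)) = max 0 (min (real n) (real n - u))"
proof (induction n)
  case (Suc n)
  have "(\<Sum>k\<in>{1..Suc n}. clip01 (real k - u))
      = max 0 (min (real n) (real n - u)) + clip01 (real n + 1 - u)"
    using Suc by (simp add: add.commute)
  also have "\<dots> = max 0 (min (real (Suc n)) (real (Suc n) - u))"
    by (simp add: clip01_def max_def min_def)
  finally show ?case .
qed simp

lemma sum_two_deltas:
  "(\<Sum>j\<in>{1..k}. if j = i then a else if j = Suc i then b else (0::real))
     = (if i \<in> {1..k} then a else 0) + (if Suc i \<in> {1..k} then b else 0)"
proof -
  have "(\<Sum>j\<in>{1..k}. if j = i then a else if j = Suc i then b else (0::real))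
     = (\<Sum>j\<in>{1..k}. (if j = i then a else 0) + (if j = Suc i then b else 0))"
    by (intro sum.cong) auto
  then show ?thesis
    by (simp add: sum.distrib)
qed

lemma abel_summation:
  fixes w :: "nat \<Rightarrow> 'v::real_vector"
  shows "(\<Sum>k\<in>{1..n}. h k *\<^sub>R w k) = h n *\<^sub>R (\<Sum>j\<in>{1..n}. w j)
          - (\<Sum>k<n. (h (Suc k) - h k) *\<^sub>R (\<Sum>j\<in>{1..k}. w j))"
  by (induction n) (simp_all add: algebra_simps)

locale grid =
  fixes N :: nat and zmin zmax \<gamma> :: real
  assumes N_ge_2: "N \<ge> 2" and zmin_less_zmax: "zmin < zmax"
    and gamma_nonneg: "0 \<le> \<gamma>" and gamma_less_1: "\<gamma> < 1"
begin

abbreviation z :: "nat \<Rightarrow> real" where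
  "z \<equiv> zgrid N zmin zmax"

definition dz :: real where
  "dz = (zmax - zmin) / (real N - 1)"

lemma dz_pos: "dz > 0"
  using N_ge_2 zmin_less_zmax by (simp add: dz_def)

lemma zgrid_eq: "z k = zmin + (real k - 1) * dz"
  by (simp add: zgrid_def dz_def)

lemma zgrid_Suc: "z (Suc k) = z k + dz"
  by (simp add: zgrid_eq algebra_simps)

lemma zgrid_mono: "i \<le> j \<Longrightarrow> z i \<le> z j"
  using dz_pos by (simp add: zgrid_eq mult_right_mono)

lemma zgrid_1: "z (Suc 0) = zmin"
  by (simp add: zgrid_eq)

lemma proj_dirac_below: "y \<le> z 1 \<Longrightarrow> proj_dirac N zmin zmax y j = (if j = 1 then 1 else 0)"
  by (simp add: proj_dirac_def)

lemma proj_dirac_above: "z N < y \<Longrightarrow> proj_dirac N zmin zmax y j = (if j = N then 1 else 0)"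
proof -
  assume "z N < y"
  moreover have "z 1 \<le> z N"
    using N_ge_2 by (intro zgrid_mono) auto
  ultimately show ?thesis
    by (simp add: proj_dirac_def)
qed

lemma proj_dirac_between:
  assumes i: "1 \<le> i" "i < N" and y: "z i < y" "y \<le> z (Suc i)"
  shows "proj_dirac N zmin zmax y j =
     (if j = i then (z (Suc i) - y) / dz else if j = Suc i then (y - z i) / dz else 0)"
proof -
  have "z 1 \<le> z i" "z (Suc i) \<le> z N"
    using i by (auto intro: zgrid_mono)
  then have not_outside: "\<not> y \<le> z 1" "\<not> z N < y"
    using y by auto
  have cell_unique: "(z i' < y \<and> y \<le> z (Suc i')) \<longleftrightarrow> i' = i" for i'
  proof
    assume cell: "z i' < y \<and> y \<le> z (Suc i')"
    have False if "Suc i' \<le> i"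
      using zgrid_mono[OF that] cell y by auto
    moreover have False if "Suc i \<le> i'"
      using zgrid_mono[OF that] cell y by auto
    ultimately show "i' = i"
      by (metis Suc_leI linorder_neqE_nat)
  qed (use y in auto)
  have width: "z (Suc i) - z i = dz"
    by (simp add: zgrid_Suc)
  have "proj_dirac N zmin zmax y j = (\<Sum>i'\<in>{1..<N}. if i' = i then
              (if j = i then (z (Suc i) - y) / dz
               else if j = Suc i then (y - z i) / dz else 0) else 0)"
    unfolding proj_dirac_def Let_def using not_outside
    by (simp only: if_False cell_unique width) (intro sum.cong refl, auto simp: width)
  also have "\<dots> = (if j = i then (z (Suc i) - y) / dz else if j = Suc i then (y - z i) / dz else 0)"
    using i by simp
  finally show ?thesis .
qed

lemma grid_cell_exists:
  assumes "z 1 < y" "y \<le> z N"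
  shows "\<exists>i. 1 \<le> i \<and> i < N \<and> z i < y \<and> y \<le> z (Suc i)"
proof -
  define r where "r = (y - zmin) / dz"
  define i where "i = nat \<lceil>r\<rceil>"
  have r_pos: "r > 0"
    using assms dz_pos by (simp add: r_def zgrid_1)
  have "y - zmin \<le> (real N - 1) * dz"
    using assms(2) by (simp add: zgrid_eq)
  then have "r \<le> real N - 1"
    using dz_pos by (simp add: r_def field_simps)
  then have "\<lceil>r\<rceil> \<le> int N - 1"
    using ceiling_le[of r "int N - 1"] by simp
  moreover have i_ceiling: "real i = of_int \<lceil>r\<rceil>"
    using r_pos by (simp add: i_def)
  ultimately have "1 \<le> i" "i < N" "r \<le> real i" "real i < r + 1"
    using r_pos by linarith+
  moreover have "y = zmin + r * dz"
    using dz_pos by (simp add: r_def)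
  ultimately show ?thesis
    using dz_pos by (auto simp: zgrid_eq intro!: exI[of _ i] mult_strict_right_mono mult_right_mono)
qed

lemma grid_cases:
  obtains (below) "y \<le> z 1" | (above) "z N < y"
    | (between) i where "1 \<le> i" "i < N" "z i < y" "y \<le> z (Suc i)"
  using grid_cell_exists by (metis not_le)

lemma proj_dirac_nonneg: "0 \<le> proj_dirac N zmin zmax y j"
  using dz_pos
  by (cases y rule: grid_cases) (auto simp: proj_dirac_below proj_dirac_above proj_dirac_between)

lemma proj_dirac_outside: "j \<notin> {1..N} \<Longrightarrow> proj_dirac N zmin zmax y j = 0"
  using N_ge_2
  by (cases y rule: grid_cases) (auto simp: proj_dirac_below proj_dirac_above proj_dirac_between)

lemma sum_proj_dirac: "(\<Sum>j\<in>{1..N}. proj_dirac N zmin zmax y j) = 1"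
proof (cases y rule: grid_cases)
  case (between i)
  then have "(\<Sum>j\<in>{1..N}. proj_dirac N zmin zmax y j)
      = (\<Sum>j\<in>{1..N}. if j = i then (z (Suc i) - y) / dz else if j = Suc i then (y - z i) / dz else 0)"
    by (simp add: proj_dirac_between)
  also have "\<dots> = (z (Suc i) - y) / dz + (y - z i) / dz"
    using between by (simp only: sum_two_deltas) auto
  also have "\<dots> = 1"
    using dz_pos by (simp add: zgrid_Suc field_simps)
  finally show ?thesis .
qed (use N_ge_2 in \<open>simp_all add: proj_dirac_below proj_dirac_above\<close>)

definition proj_cdf :: "nat \<Rightarrow> real \<Rightarrow> real" where
  "proj_cdf k y = (\<Sum>j\<in>{1..k}. proj_dirac N zmin zmax y j)"

lemma proj_cdf_between:
  assumes between: "1 \<le> i" "i < N" "z i < y" "y \<le> z (Suc i)"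
  shows "proj_cdf k y = clip01 ((z (Suc k) - y) / dz)"
proof -
  have "proj_cdf k y
      = (\<Sum>j\<in>{1..k}. if j = i then (z (Suc i) - y) / dz else if j = Suc i then (y - z i) / dz else 0)"
    using between by (simp add: proj_cdf_def proj_dirac_between)
  also have "\<dots> = (if i \<in> {1..k} then (z (Suc i) - y) / dz else 0)
      + (if Suc i \<in> {1..k} then (y - z i) / dz else 0)"
    by (rule sum_two_deltas)
  finally have cdf: "proj_cdf k y = \<dots>" .
  consider "k < i" | "k = i" | "Suc i \<le> k"
    by linarith
  then show ?thesis
  proof cases
    case 1
    then have "z (Suc k) \<le> z i"
      by (intro zgrid_mono) auto
    then have "(z (Suc k) - y) / dz \<le> 0"
      using between dz_pos by (simp add: divide_nonpos_pos)
    then show ?thesis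
      using 1 cdf by (simp add: clip01_def)
  next
    case 2
    then have "0 \<le> (z (Suc k) - y) / dz" "(z (Suc k) - y) / dz \<le> 1"
      using between dz_pos by (auto simp: zgrid_Suc field_simps)
    then show ?thesis
      using 2 cdf between by (simp add: clip01_def)
  next
    case 3
    then have "z (Suc (Suc i)) \<le> z (Suc k)"
      by (intro zgrid_mono) auto
    then have "1 \<le> (z (Suc k) - y) / dz"
      using between dz_pos by (simp add: zgrid_Suc field_simps)
    moreover have "(z (Suc i) - y) / dz + (y - z i) / dz = 1"
      using dz_pos by (simp add: zgrid_Suc field_simps)
    ultimately show ?thesis
      using 3 cdf between by (simp add: clip01_def)
  qed
qed

lemma proj_cdf_eq:
  assumes k: "1 \<le> k" "k < N"
  shows "proj_cdf k y = clip01 ((z (Suc k) - y) / dz)"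
proof (cases y rule: grid_cases)
  case below
  have "z (Suc 1) \<le> z (Suc k)"
    using k by (intro zgrid_mono) auto
  then have "1 \<le> (z (Suc k) - y) / dz"
    using below dz_pos by (simp add: zgrid_Suc field_simps)
  then show ?thesis
    using below k by (simp add: proj_cdf_def proj_dirac_below clip01_def)
next
  case above
  have "z (Suc k) \<le> z N"
    using k by (intro zgrid_mono) auto
  then have "(z (Suc k) - y) / dz \<le> 0"
    using above dz_pos by (simp add: divide_nonpos_pos)
  then show ?thesis
    using above k by (simp add: proj_cdf_def proj_dirac_above clip01_def)
next
  case (between i)
  then show ?thesis
    by (rule proj_cdf_between)
qed

lemma proj_cdf_antimono:
  assumes "1 \<le> k" "k < N" "y \<le> y'"
  shows "proj_cdf k y' \<le> proj_cdf k y"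
proof -
  have "(z (Suc k) - y') / dz \<le> (z (Suc k) - y) / dz"
    using assms dz_pos by (simp add: divide_right_mono)
  then show ?thesis
    using assms by (simp add: proj_cdf_eq clip01_def max_def min_def)
qed

definition proj_cdf_total :: "real \<Rightarrow> real" where
  "proj_cdf_total y = (\<Sum>k\<in>{1..<N}. proj_cdf k y)"

lemma proj_cdf_total_eq:
  "proj_cdf_total y = max 0 (min (real N - 1) (real N - 1 - (y - zmin) / dz))"
proof -
  have "proj_cdf_total y = (\<Sum>k\<in>{1..N-1}. clip01 (real k - (y - zmin) / dz))"
    unfolding proj_cdf_total_def
  proof (intro sum.cong)
    fix k assume k: "k \<in> {1..N-1}"
    then have "proj_cdf k y = clip01 ((z (Suc k) - y) / dz)"
      using N_ge_2 by (intro proj_cdf_eq) auto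
    also have "(z (Suc k) - y) / dz = real k - (y - zmin) / dz"
      using dz_pos by (simp add: zgrid_eq field_simps)
    finally show "proj_cdf k y = clip01 (real k - (y - zmin) / dz)" .
  qed (use N_ge_2 in auto)
  also have "\<dots> = max 0 (min (real N - 1) (real N - 1 - (y - zmin) / dz))"
    using N_ge_2 sum_clip01_shift[where n="N - 1" and u="(y - zmin) / dz"] by (simp add: of_nat_diff)
  finally show ?thesis .
qed

lemma proj_cdf_total_lipschitz:
  assumes "y \<le> y'"
  shows "proj_cdf_total y - proj_cdf_total y' \<le> (y' - y) / dz"
proof -
  have "(y - zmin) / dz \<le> (y' - zmin) / dz"
    using assms dz_pos by (simp add: divide_right_mono)
  moreover have "(y' - y) / dz = (y' - zmin) / dz - (y - zmin) / dz"
    by (simp add: diff_divide_distrib)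
  ultimately show ?thesis
    unfolding proj_cdf_total_eq by (simp add: max_def min_def)
qed

section \<open>The Cram\'er seminorm\<close>

definition mass :: "(nat \<Rightarrow> 'v::real_vector) \<Rightarrow> 'v" where
  "mass w = (\<Sum>j\<in>{1..N}. w j)"

text \<open>The Cram\'er (\<open>\<ell>\<^sub>1\<close>-CDF) distance to zero, up to the factor \<open>dz\<close>; a norm on
  measures of total mass zero by norm_le_cramer.\<close>
definition cramer :: "(nat \<Rightarrow> 'v::real_normed_vector) \<Rightarrow> real" where
  "cramer w = (\<Sum>k\<in>{1..<N}. norm (\<Sum>j\<in>{1..k}. w j))"

abbreviation push :: "real \<Rightarrow> (nat \<Rightarrow> 'v::real_vector) \<Rightarrow> nat \<Rightarrow> 'v" where
  "push \<equiv> proj_push N zmin zmax \<gamma>"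

lemma push_outside: "j \<notin> {1..N} \<Longrightarrow> push c w j = 0"
  by (simp add: proj_push_def proj_dirac_outside)

lemma push_sum: "push c (\<lambda>j. \<Sum>x\<in>X. f x j) j' = (\<Sum>x\<in>X. push c (f x) j')"
  unfolding proj_push_def by (simp add: scaleR_sum_right) (rule sum.swap)

lemma push_scaleR: "push c (\<lambda>j. a *\<^sub>R w j) j' = a *\<^sub>R push c w j'"
  unfolding proj_push_def by (simp add: scaleR_sum_right algebra_simps)

lemma push_add: "push c (\<lambda>j. v j + w j) j' = push c v j' + push c w j'"
  unfolding proj_push_def by (simp add: scaleR_add_right sum.distrib)

lemma push_diff: "push c (\<lambda>j. v j - w j) j' = push c v j' - push c w j'"
  unfolding proj_push_def by (simp add: scaleR_diff_right sum_subtractf)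

lemma mass_sum: "mass (\<lambda>j. \<Sum>x\<in>X. f x j) = (\<Sum>x\<in>X. mass (f x))"
  unfolding mass_def by (rule sum.swap)

lemma mass_scaleR: "mass (\<lambda>j. a *\<^sub>R w j) = a *\<^sub>R mass w"
  unfolding mass_def by (simp add: scaleR_sum_right)

lemma mass_diff: "mass (\<lambda>j. v j - w j) = mass v - mass w"
  unfolding mass_def by (simp add: sum_subtractf)

lemma mass_push: "mass (push c w) = mass w"
proof -
  have "mass (push c w)
      = (\<Sum>k\<in>{1..N}. (\<Sum>j\<in>{1..N}. proj_dirac N zmin zmax (c + \<gamma> * z k) j) *\<^sub>R w k)"
    unfolding mass_def proj_push_def by (subst sum.swap) (simp add: scaleR_sum_left)
  then show ?thesis
    by (simp add: sum_proj_dirac mass_def del: One_nat_def)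
qed

lemma partial_sum_push:
  "(\<Sum>j\<in>{1..m}. push c w j) = (\<Sum>k\<in>{1..N}. proj_cdf m (c + \<gamma> * z k) *\<^sub>R w k)"
  unfolding proj_push_def proj_cdf_def by (subst sum.swap) (simp add: scaleR_sum_left)

lemma cramer_nonneg: "0 \<le> cramer w"
  unfolding cramer_def by (intro sum_nonneg) auto

lemma cramer_sum_le: "cramer (\<lambda>j. \<Sum>x\<in>X. f x j) \<le> (\<Sum>x\<in>X. cramer (f x))"
proof -
  have "cramer (\<lambda>j. \<Sum>x\<in>X. f x j) = (\<Sum>k\<in>{1..<N}. norm (\<Sum>x\<in>X. \<Sum>j\<in>{1..k}. f x j))"
    unfolding cramer_def by (subst sum.swap) simp
  also have "\<dots> \<le> (\<Sum>k\<in>{1..<N}. \<Sum>x\<in>X. norm (\<Sum>j\<in>{1..k}. f x j))"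
    by (intro sum_mono norm_sum)
  also have "\<dots> = (\<Sum>x\<in>X. cramer (f x))"
    unfolding cramer_def by (rule sum.swap)
  finally show ?thesis .
qed

lemma cramer_scaleR: "cramer (\<lambda>j. a *\<^sub>R w j) = \<bar>a\<bar> * cramer w"
  unfolding cramer_def by (simp add: scaleR_sum_right[symmetric] sum_distrib_left)

lemma norm_le_cramer:
  assumes "mass w = 0" "i \<in> {1..N}"
  shows "norm (w i) \<le> 2 * cramer w"
proof -
  define F where "F k = (\<Sum>j\<in>{1..k}. w j)" for k
  have F_le: "norm (F k) \<le> cramer w" if "k < N" for k
  proof (cases "k = 0")
    case False
    with that show ?thesis
      unfolding cramer_def F_def by (intro member_le_sum) auto
  qed (simp add: F_def cramer_nonneg)
  have "{1..i} = insert i {1..i - 1}" "i \<notin> {1..i - 1}"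
    using assms(2) by auto
  then have w_i: "w i = F i - F (i - 1)"
    unfolding F_def by (simp only: sum.insert[OF finite_atLeastAtMost]) simp
  show ?thesis
  proof (cases "i < N")
    case True
    have "norm (w i) \<le> norm (F i) + norm (F (i - 1))"
      unfolding w_i by (rule norm_triangle_ineq4)
    then show ?thesis
      using F_le[of i] F_le[of "i - 1"] True by linarith
  next
    case False
    then have "i = N" "F N = 0"
      using assms by (auto simp: F_def mass_def)
    then have "norm (w i) = norm (F (N - 1))"
      using w_i by simp
    then show ?thesis
      using F_le[of "N - 1"] N_ge_2 cramer_nonneg[of w] by auto
  qed
qed

lemma norm_partial_sum_push_le:
  fixes w :: "nat \<Rightarrow> 'v::real_normed_vector"
  assumes mass0: "mass w = 0" and m: "m \<in> {1..<N}"
  shows "norm (\<Sum>j\<in>{1..m}. push c w j) \<le> (\<Sum>k<N.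
     (proj_cdf m (c + \<gamma> * z k) - proj_cdf m (c + \<gamma> * z (Suc k))) * norm (\<Sum>j\<in>{1..k}. w j))"
proof -
  define h where "h k = proj_cdf m (c + \<gamma> * z k)" for k
  define F where "F k = (\<Sum>j\<in>{1..k}. w j)" for k
  have h_antimono: "h (Suc k) \<le> h k" for k
    unfolding h_def using m gamma_nonneg dz_pos
    by (intro proj_cdf_antimono) (auto simp: zgrid_Suc distrib_left)
  have "(\<Sum>j\<in>{1..m}. push c w j) = (\<Sum>k\<in>{1..N}. h k *\<^sub>R w k)"
    unfolding h_def by (rule partial_sum_push)
  also have "\<dots> = - (\<Sum>k<N. (h (Suc k) - h k) *\<^sub>R F k)"
    using mass0 abel_summation[of h w N] by (simp add: F_def mass_def)
  finally have "norm (\<Sum>j\<in>{1..m}. push c w j) = norm (\<Sum>k<N. (h (Suc k) - h k) *\<^sub>R F k)"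
    by simp
  also have "\<dots> \<le> (\<Sum>k<N. norm ((h (Suc k) - h k) *\<^sub>R F k))"
    by (rule norm_sum)
  also have "\<dots> = (\<Sum>k<N. (h k - h (Suc k)) * norm (F k))"
    using h_antimono by (intro sum.cong) auto
  finally show ?thesis
    by (simp add: h_def F_def)
qed

text \<open>Shifting all atoms by \<open>\<gamma> dz\<close> moves the summed CDFs of their projections by at most
  \<open>\<gamma>\<close> (proj_cdf_total_lipschitz); Abel summation turns this into the contraction.\<close>
lemma cramer_push_le:
  fixes w :: "nat \<Rightarrow> 'v::real_normed_vector"
  assumes mass0: "mass w = 0"
  shows "cramer (push c w) \<le> \<gamma> * cramer w"
proof -
  define y where "y k = c + \<gamma> * z k" for k
  define F where "F k = (\<Sum>j\<in>{1..k}. w j)" for k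
  have "cramer (push c w) \<le> (\<Sum>m\<in>{1..<N}. \<Sum>k<N.
      (proj_cdf m (y k) - proj_cdf m (y (Suc k))) * norm (F k))"
    unfolding cramer_def y_def F_def by (intro sum_mono norm_partial_sum_push_le mass0)
  also have "\<dots> = (\<Sum>k<N. (proj_cdf_total (y k) - proj_cdf_total (y (Suc k))) * norm (F k))"
    unfolding proj_cdf_total_def sum_subtractf[symmetric] sum_distrib_right by (rule sum.swap)
  also have "\<dots> \<le> (\<Sum>k<N. \<gamma> * norm (F k))"
  proof (intro sum_mono mult_right_mono)
    fix k
    have "y k \<le> y (Suc k)" "y (Suc k) - y k = \<gamma> * dz"
      using gamma_nonneg dz_pos by (simp_all add: y_def zgrid_Suc algebra_simps)
    then show "proj_cdf_total (y k) - proj_cdf_total (y (Suc k)) \<le> \<gamma>"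
      using proj_cdf_total_lipschitz[of "y k" "y (Suc k)"] dz_pos by simp
  qed simp
  also have "\<dots> = \<gamma> * cramer w"
  proof -
    have "{..<N} = insert 0 {1..<N}"
      using N_ge_2 by auto
    then show ?thesis
      by (simp add: sum_distrib_left[symmetric] cramer_def F_def)
  qed
  finally show ?thesis .
qed

lemma cramer_comp_ops_le:
  fixes w :: "nat \<Rightarrow> 'v::real_normed_vector"
  assumes "mass w = 0"
  shows "mass (comp_ops N zmin zmax \<gamma> cs w) = 0
    \<and> cramer (comp_ops N zmin zmax \<gamma> cs w) \<le> \<gamma> ^ length cs * cramer w"
proof (induction cs)
  case (Cons c cs)
  have "cramer (push c (comp_ops N zmin zmax \<gamma> cs w)) \<le> \<gamma> * cramer (comp_ops N zmin zmax \<gamma> cs w)"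
    using Cons by (intro cramer_push_le) auto
  also have "\<dots> \<le> \<gamma> * (\<gamma> ^ length cs * cramer w)"
    using Cons gamma_nonneg by (intro mult_left_mono) auto
  finally show ?case
    using Cons by (simp add: mass_push mult.assoc)
qed (use assms in simp)

lemma cramer_mixture_le:
  fixes D :: "'x::finite \<Rightarrow> nat \<Rightarrow> 'v::real_normed_vector"
  assumes p_nonneg: "\<And>x. 0 \<le> p x" and p_sum: "(\<Sum>x\<in>UNIV. p x) = 1"
    and bound: "\<And>x. cramer (D x) \<le> B"
  shows "cramer (\<lambda>k. \<Sum>x\<in>UNIV. p x *\<^sub>R D x k) \<le> B"
proof -
  have "cramer (\<lambda>k. \<Sum>x\<in>UNIV. p x *\<^sub>R D x k) \<le> (\<Sum>x\<in>UNIV. p x * cramer (D x))"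
    using cramer_sum_le[of "\<lambda>x k. p x *\<^sub>R D x k"] p_nonneg by (simp add: cramer_scaleR)
  also have "\<dots> \<le> (\<Sum>x\<in>UNIV. p x * B)"
    using p_nonneg bound by (intro sum_mono mult_left_mono) auto
  finally show ?thesis
    using p_sum by (simp add: sum_distrib_right[symmetric])
qed

context
  fixes D :: "nat \<Rightarrow> 'x::finite \<Rightarrow> nat \<Rightarrow> 'v::real_normed_vector"
  assumes mass0: "\<And>x. mass (D 0 x) = 0"
    and step: "\<And>n B x. (\<And>y. mass (D n y) = 0) \<Longrightarrow> (\<And>y. cramer (D n y) \<le> B) \<Longrightarrow>
        mass (D (Suc n) x) = 0 \<and> cramer (D (Suc n) x) \<le> \<gamma> * B"
begin

lemma zero_mass_iterates_decay:
  assumes j: "j \<in> {1..N}"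
  shows "norm (D n x j) \<le> 2 * (\<Sum>y\<in>UNIV. cramer (D 0 y)) * \<gamma> ^ n"
proof -
  define B where "B = (\<Sum>y\<in>UNIV. cramer (D 0 y))"
  have "mass (D n x) = 0 \<and> cramer (D n x) \<le> \<gamma> ^ n * B" for n x
  proof (induction n arbitrary: x)
    case 0
    have "cramer (D 0 x) \<le> B"
      unfolding B_def by (rule member_le_sum) (auto simp: cramer_nonneg)
    then show ?case
      using mass0 by simp
  next
    case (Suc n)
    then show ?case
      using step[of n "\<gamma> ^ n * B" x] by (simp add: mult.assoc)
  qed
  then have "norm (D n x j) \<le> 2 * cramer (D n x)" "cramer (D n x) \<le> \<gamma> ^ n * B"
    using norm_le_cramer[OF _ j, of "D n x"] by auto
  then have "norm (D n x j) \<le> 2 * (\<gamma> ^ n * B)"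
    by linarith
  then show ?thesis
    by (simp add: B_def mult_ac)
qed

lemma zero_mass_iterates_tendsto_0:
  assumes j: "j \<in> {1..N}"
  shows "(\<lambda>n. D n x j) \<longlonglongrightarrow> 0"
proof (rule Lim_null_comparison)
  show "\<forall>\<^sub>F n in sequentially. norm (D n x j) \<le> 2 * (\<Sum>y\<in>UNIV. cramer (D 0 y)) * \<gamma> ^ n"
    using zero_mass_iterates_decay[OF j] by simp
  show "(\<lambda>n. 2 * (\<Sum>y\<in>UNIV. cramer (D 0 y)) * \<gamma> ^ n) \<longlonglongrightarrow> 0"
    using gamma_nonneg gamma_less_1 by (intro tendsto_mult_right_zero LIMSEQ_power_zero) auto
qed

end

end

section \<open>Projected Bellman operators\<close>

lemma dist_family_limit:
  assumes dist: "\<And>n. dist_family N (\<eta> n)" and lim: "\<And>s a j. (\<lambda>n. \<eta> n s a j) \<longlonglongrightarrow> L s a j"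
  shows "dist_family N L"
  unfolding dist_family_def
proof (intro allI conjI ballI impI)
  fix s a j
  show "L s a j = 0" if "j \<notin> {1..N}"
    using LIMSEQ_unique[OF lim[of s a j]] dist that by (simp add: dist_family_def)
  show "0 \<le> L s a j" if "j \<in> {1..N}"
    using dist that by (intro LIMSEQ_le_const[OF lim]) (auto simp: dist_family_def)
next
  fix s a
  have "(\<lambda>n. \<Sum>j\<in>{1..N}. \<eta> n s a j) \<longlonglongrightarrow> (\<Sum>j\<in>{1..N}. L s a j)"
    by (intro tendsto_sum lim)
  moreover have "(\<lambda>n. \<Sum>j\<in>{1..N}. \<eta> n s a j) = (\<lambda>n. 1)"
    using dist by (simp add: dist_family_def)
  ultimately show "(\<Sum>j\<in>{1..N}. L s a j) = 1"
    using LIMSEQ_unique tendsto_const by metis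
qed

definition policy :: "('s \<Rightarrow> 'a::finite \<Rightarrow> real) \<Rightarrow> bool" where
  "policy pol \<longleftrightarrow> (\<forall>s a. 0 \<le> pol s a) \<and> (\<forall>s. (\<Sum>a\<in>UNIV. pol s a) = 1)"

locale mdp = grid N zmin zmax \<gamma> for N zmin zmax \<gamma> +
  fixes C :: "'s::finite \<Rightarrow> 'a::finite \<Rightarrow> real" and P :: "'s \<Rightarrow> 'a \<Rightarrow> 's \<Rightarrow> real"
  assumes P_nonneg: "0 \<le> P s a s'" and P_sum: "(\<Sum>s'\<in>UNIV. P s a s') = 1"
begin

definition bellman :: "('s \<Rightarrow> 'a \<Rightarrow> real) \<Rightarrow> ('s \<Rightarrow> 'a \<Rightarrow> nat \<Rightarrow> 'v::real_vector) \<Rightarrow> 's \<Rightarrow> 'a \<Rightarrow> nat \<Rightarrow> 'v" where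
  "bellman pol \<delta> s a = push (C s a) (\<lambda>k. \<Sum>s'\<in>UNIV. P s a s' *\<^sub>R (\<Sum>a'\<in>UNIV. pol s' a' *\<^sub>R \<delta> s' a' k))"

definition state_bellman :: "('s \<Rightarrow> 'a \<Rightarrow> real) \<Rightarrow> ('s \<Rightarrow> nat \<Rightarrow> 'v::real_vector) \<Rightarrow> 's \<Rightarrow> nat \<Rightarrow> 'v" where
  "state_bellman pol w s j = (\<Sum>a\<in>UNIV. pol s a *\<^sub>R push (C s a) (\<lambda>k. \<Sum>s'\<in>UNIV. P s a s' *\<^sub>R w s' k) j)"

lemma pbellman_eq_bellman: "pbellman N zmin zmax \<gamma> C P pol \<eta> = bellman pol \<eta>"
  by (simp add: pbellman_def bellman_def fun_eq_iff)

lemma bellman_diff: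
  "bellman pol (\<lambda>s a j. \<delta>1 s a j - \<delta>2 s a j) s a j = bellman pol \<delta>1 s a j - bellman pol \<delta>2 s a j"
  unfolding bellman_def by (simp add: push_diff[symmetric] scaleR_diff_right sum_subtractf)

lemma state_bellman_diff:
  "state_bellman pol (\<lambda>s j. w1 s j - w2 s j) s j = state_bellman pol w1 s j - state_bellman pol w2 s j"
  unfolding state_bellman_def by (simp add: push_diff scaleR_diff_right sum_subtractf)

lemma push_mixture_contracts:
  fixes D :: "'x::finite \<Rightarrow> nat \<Rightarrow> 'v::real_normed_vector"
  assumes "\<And>x. 0 \<le> p x" "(\<Sum>x\<in>UNIV. p x) = 1"
    and mass0: "\<And>x. mass (D x) = 0" and bound: "\<And>x. cramer (D x) \<le> B"
  shows "mass (push c (\<lambda>k. \<Sum>x\<in>UNIV. p x *\<^sub>R D x k)) = 0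
    \<and> cramer (push c (\<lambda>k. \<Sum>x\<in>UNIV. p x *\<^sub>R D x k)) \<le> \<gamma> * B"
proof -
  have "mass (\<lambda>k. \<Sum>x\<in>UNIV. p x *\<^sub>R D x k) = 0"
    by (simp add: mass_sum mass_scaleR mass0)
  moreover have "cramer (\<lambda>k. \<Sum>x\<in>UNIV. p x *\<^sub>R D x k) \<le> B"
    using assms by (intro cramer_mixture_le)
  ultimately show ?thesis
    using cramer_push_le[of _ c] mult_left_mono[OF _ gamma_nonneg] by (fastforce simp: mass_push)
qed

lemma bellman_contracts:
  fixes \<delta> :: "'s \<Rightarrow> 'a \<Rightarrow> nat \<Rightarrow> 'v::real_normed_vector"
  assumes pol: "policy pol" and mass0: "\<And>s a. mass (\<delta> s a) = 0" and bound: "\<And>s a. cramer (\<delta> s a) \<le> B"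
  shows "mass (bellman pol \<delta> s a) = 0 \<and> cramer (bellman pol \<delta> s a) \<le> \<gamma> * B"
proof -
  have "mass (\<lambda>k. \<Sum>a'\<in>UNIV. pol s' a' *\<^sub>R \<delta> s' a' k) = 0"
      "cramer (\<lambda>k. \<Sum>a'\<in>UNIV. pol s' a' *\<^sub>R \<delta> s' a' k) \<le> B" for s'
    using pol mass0 bound by (auto simp: mass_sum mass_scaleR policy_def intro!: cramer_mixture_le)
  then show ?thesis
    unfolding bellman_def by (intro push_mixture_contracts P_nonneg P_sum)
qed

lemma state_bellman_contracts:
  fixes w :: "'s \<Rightarrow> nat \<Rightarrow> 'v::real_normed_vector"
  assumes pol: "policy pol" and mass0: "\<And>s. mass (w s) = 0" and bound: "\<And>s. cramer (w s) \<le> B"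
  shows "mass (state_bellman pol w s) = 0 \<and> cramer (state_bellman pol w s) \<le> \<gamma> * B"
proof -
  have pushed: "mass (push (C s a) (\<lambda>k. \<Sum>s'\<in>UNIV. P s a s' *\<^sub>R w s' k)) = 0
      \<and> cramer (push (C s a) (\<lambda>k. \<Sum>s'\<in>UNIV. P s a s' *\<^sub>R w s' k)) \<le> \<gamma> * B" for a
    using mass0 bound by (intro push_mixture_contracts P_nonneg P_sum)
  have "state_bellman pol w s = (\<lambda>j. \<Sum>a\<in>UNIV. pol s a *\<^sub>R push (C s a) (\<lambda>k. \<Sum>s'\<in>UNIV. P s a s' *\<^sub>R w s' k) j)"
    by (simp add: state_bellman_def fun_eq_iff)
  then show ?thesis
    using pol pushed by (auto simp: mass_sum mass_scaleR policy_def intro!: cramer_mixture_le)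
qed

lemma bellman_dist_family:
  assumes pol: "policy pol" and dist: "dist_family N \<eta>"
  shows "dist_family N (bellman pol \<eta>)"
  unfolding dist_family_def
proof (intro allI conjI ballI impI)
  fix s a j
  show "bellman pol \<eta> s a j = 0" if "j \<notin> {1..N}"
    using that by (simp add: bellman_def push_outside)
  have "0 \<le> \<eta> s' a' k" for s' a' k
    using dist by (cases "k \<in> {1..N}") (auto simp: dist_family_def)
  then show "0 \<le> bellman pol \<eta> s a j"
    using pol unfolding bellman_def proj_push_def policy_def
    by (auto intro!: sum_nonneg mult_nonneg_nonneg proj_dirac_nonneg P_nonneg)
next
  fix s a
  have "mass (\<eta> s' a') = 1" for s' a'
    using dist by (simp add: dist_family_def mass_def)
  then have "mass (bellman pol \<eta> s a) = 1"
    using pol unfolding bellman_def mass_push mass_sum mass_scaleR by (simp add: policy_def P_sum)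
  then show "(\<Sum>j\<in>{1..N}. bellman pol \<eta> s a j) = 1"
    by (simp add: mass_def)
qed

lemma bellman_iterates_decay:
  fixes D :: "nat \<Rightarrow> 's \<Rightarrow> 'a \<Rightarrow> nat \<Rightarrow> 'v::real_normed_vector"
  assumes pol: "policy pol" and rec: "\<And>n. D (Suc n) = bellman pol (D n)"
    and mass0: "\<And>s a. mass (D 0 s a) = 0" and j: "j \<in> {1..N}"
  shows "norm (D n s a j) \<le> 2 * (\<Sum>x\<in>UNIV. cramer (D 0 (fst x) (snd x))) * \<gamma> ^ n"
proof -
  define D' where "D' n x = D n (fst x) (snd x)" for n x
  have "norm (D' n (s, a) j) \<le> 2 * (\<Sum>x\<in>UNIV. cramer (D' 0 x)) * \<gamma> ^ n"
  proof (rule zero_mass_iterates_decay[OF _ _ j])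
    show "mass (D' 0 x) = 0" for x
      using mass0 by (simp add: D'_def)
  next
    fix n B x
    assume "\<And>y. mass (D' n y) = 0" "\<And>y. cramer (D' n y) \<le> B"
    then have "mass (D n s' a') = 0" "cramer (D n s' a') \<le> B" for s' a'
      unfolding D'_def by (metis fst_conv snd_conv)+
    then show "mass (D' (Suc n) x) = 0 \<and> cramer (D' (Suc n) x) \<le> \<gamma> * B"
      unfolding D'_def rec by (rule bellman_contracts[OF pol])
  qed
  then show ?thesis
    by (simp add: D'_def)
qed

lemma bellman_fixpoint_unique:
  assumes pol: "policy pol"
    and \<eta>1: "dist_family N \<eta>1" "bellman pol \<eta>1 = \<eta>1"
    and \<eta>2: "dist_family N \<eta>2" "bellman pol \<eta>2 = \<eta>2"
  shows "\<eta>1 = \<eta>2"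
proof (intro ext)
  fix s a j
  define \<delta> where "\<delta> = (\<lambda>s a j. \<eta>1 s a j - \<eta>2 s a j)"
  have fixed: "bellman pol \<delta> = \<delta>"
    unfolding \<delta>_def by (intro ext) (simp add: bellman_diff \<eta>1 \<eta>2)
  have mass0: "mass (\<delta> s a) = 0" for s a
    using \<eta>1 \<eta>2 by (simp add: \<delta>_def mass_diff dist_family_def mass_def)
  show "\<eta>1 s a j = \<eta>2 s a j"
  proof (cases "j \<in> {1..N}")
    case True
    define B where "B = (\<Sum>x\<in>UNIV. cramer (\<delta> (fst x) (snd x)))"
    have "norm (\<delta> s a j) \<le> 2 * B * \<gamma> ^ n" for n
      using bellman_iterates_decay[of pol "\<lambda>n. \<delta>", OF pol _ mass0 True] fixed by (simp add: B_def)
    moreover have "(\<lambda>n. 2 * B * \<gamma> ^ n) \<longlonglongrightarrow> 0"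
      using gamma_nonneg gamma_less_1 by (intro tendsto_mult_right_zero LIMSEQ_power_zero) auto
    ultimately have "norm (\<delta> s a j) \<le> 0"
      by (intro LIMSEQ_le_const[of "\<lambda>n. 2 * B * \<gamma> ^ n"]) auto
    then show ?thesis
      by (simp add: \<delta>_def)
  qed (use \<eta>1(1) \<eta>2(1) in \<open>simp add: dist_family_def\<close>)
qed

lemma bellman_iterates_converge:
  assumes pol: "policy pol" and rec: "\<And>n. \<eta> (Suc n) = bellman pol (\<eta> n)"
    and dist: "\<And>n. dist_family N (\<eta> n)"
  shows "\<exists>L. \<forall>s a j. (\<lambda>n. \<eta> n s a j) \<longlonglongrightarrow> L s a j"
proof -
  define D where "D n = (\<lambda>s a j. \<eta> (Suc n) s a j - \<eta> n s a j)" for n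
  have D_Suc: "D (Suc n) = bellman pol (D n)" for n
    unfolding D_def by (intro ext) (simp add: bellman_diff rec)
  have mass0: "mass (D n s a) = 0" for n s a
    using dist[of n] dist[of "Suc n"] by (simp add: D_def mass_diff dist_family_def mass_def)
  have "summable (\<lambda>n. D n s a j)" for s a j
  proof (cases "j \<in> {1..N}")
    case True
    define B where "B = (\<Sum>x\<in>UNIV. cramer (D 0 (fst x) (snd x)))"
    have "summable (\<lambda>n. 2 * B * \<gamma> ^ n)"
      using gamma_nonneg gamma_less_1 by (intro summable_mult summable_geometric) auto
    moreover have "norm (D n s a j) \<le> 2 * B * \<gamma> ^ n" for n
      unfolding B_def by (rule bellman_iterates_decay[where D=D, OF pol D_Suc mass0 True])
    ultimately show ?thesis
      by (rule summable_comparison_test')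
  next
    case False
    then have "D n s a j = 0" for n
      using dist[of n] dist[of "Suc n"] by (simp add: D_def dist_family_def)
    then show ?thesis
      by simp
  qed
  then have "(\<lambda>n. \<eta> 0 s a j + (\<Sum>k<n. D k s a j)) \<longlonglongrightarrow> \<eta> 0 s a j + (\<Sum>k. D k s a j)" for s a j
    by (intro tendsto_add tendsto_const summable_LIMSEQ)
  moreover have "\<eta> 0 s a j + (\<Sum>k<n. D k s a j) = \<eta> n s a j" for n s a j
    using sum_lessThan_telescope[of "\<lambda>k. \<eta> k s a j" n] by (simp add: D_def)
  ultimately have "(\<lambda>n. \<eta> n s a j) \<longlonglongrightarrow> \<eta> 0 s a j + (\<Sum>k. D k s a j)" for s a j
    by simp
  then show ?thesis
    by (intro exI[where x="\<lambda>s a j. \<eta> 0 s a j + (\<Sum>k. D k s a j)"]) simp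
qed

lemma bellman_fixpoint_exists:
  assumes pol: "policy pol"
  shows "\<exists>\<eta>. dist_family N \<eta> \<and> bellman pol \<eta> = \<eta>"
proof -
  define \<eta> where "\<eta> n = (bellman pol ^^ n) (\<lambda>s a j. if j = 1 then 1 else (0::real))" for n
  have \<eta>_Suc: "\<eta> (Suc n) = bellman pol (\<eta> n)" for n
    by (simp add: \<eta>_def)
  have dist: "dist_family N (\<eta> n)" for n
  proof (induction n)
    case 0
    show ?case
      using N_ge_2 by (simp add: \<eta>_def dist_family_def)
  qed (simp add: \<eta>_Suc bellman_dist_family pol)
  obtain L where lim: "\<And>s a j. (\<lambda>n. \<eta> n s a j) \<longlonglongrightarrow> L s a j"
    using bellman_iterates_converge[where \<eta>=\<eta>, OF pol \<eta>_Suc dist] by blast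
  have "(\<lambda>n. bellman pol (\<eta> n) s a j) \<longlonglongrightarrow> bellman pol L s a j" for s a j
    unfolding bellman_def proj_push_def by (intro tendsto_intros lim)
  moreover have "(\<lambda>n. bellman pol (\<eta> n) s a j) \<longlonglongrightarrow> L s a j" for s a j
    unfolding \<eta>_Suc[symmetric] using lim by (rule LIMSEQ_Suc)
  ultimately have "bellman pol L = L"
    using LIMSEQ_unique by (intro ext) blast
  then show ?thesis
    using dist_family_limit[OF dist lim] by blast
qed

lemma eta_fix:
  assumes pol: "policy pol"
  shows "dist_family N (eta_fix N zmin zmax \<gamma> C P pol)"
    and "bellman pol (eta_fix N zmin zmax \<gamma> C P pol) = eta_fix N zmin zmax \<gamma> C P pol"
proof -
  have "\<exists>!\<eta>. dist_family N \<eta> \<and> pbellman N zmin zmax \<gamma> C P pol \<eta> = \<eta>"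
    using bellman_fixpoint_exists[OF pol] bellman_fixpoint_unique[OF pol]
    unfolding pbellman_eq_bellman by blast
  from theI'[OF this] show "dist_family N (eta_fix N zmin zmax \<gamma> C P pol)"
    "bellman pol (eta_fix N zmin zmax \<gamma> C P pol) = eta_fix N zmin zmax \<gamma> C P pol"
    unfolding eta_fix_def pbellman_eq_bellman by auto
qed

end

section \<open>Sums over paths\<close>

definition paths :: "nat \<Rightarrow> 'x list set" where
  "paths m = {xs. length xs = m}"

lemma finite_paths: "finite (paths m :: 'x::finite list set)"
  using finite_lists_length_eq[of "UNIV :: 'x set" m] by (simp add: paths_def)

lemma sum_paths_Suc:
  fixes f :: "'x::finite list \<Rightarrow> 'v::comm_monoid_add"
  shows "(\<Sum>xs\<in>paths (Suc m). f xs) = (\<Sum>xs\<in>paths m. \<Sum>x\<in>UNIV. f (x # xs))"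
proof -
  have paths_Suc: "paths (Suc m) = (\<lambda>(xs, x). x # xs) ` (paths m \<times> UNIV)"
    by (auto simp: paths_def length_Suc_conv)
  have "inj_on (\<lambda>(xs, x). x # xs) (paths m \<times> (UNIV :: 'x set))"
    by (auto simp: inj_on_def)
  then have "(\<Sum>xs\<in>paths (Suc m). f xs) = (\<Sum>p\<in>paths m \<times> UNIV. f ((\<lambda>(xs, x). x # xs) p))"
    unfolding paths_Suc by (simp only: sum.reindex o_def)
  then show ?thesis
    by (simp add: sum.cartesian_product split_def)
qed

lemma sum_UNIV_prod:
  fixes f :: "'s::finite \<times> 'a::finite \<Rightarrow> 'v::comm_monoid_add"
  shows "(\<Sum>x\<in>UNIV. f x) = (\<Sum>s\<in>UNIV. \<Sum>a\<in>UNIV. f (s, a))"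
  by (simp add: UNIV_Times_UNIV[symmetric] sum.cartesian_product del: UNIV_Times_UNIV)

lemma sum_by_head:
  fixes u :: "('s::finite \<times> 'a) list \<Rightarrow> 'v::real_vector"
  assumes "finite X"
  shows "(\<Sum>xs\<in>X. h (fst (hd xs)) *\<^sub>R u xs)
       = (\<Sum>s\<in>UNIV. h s *\<^sub>R (\<Sum>xs\<in>X. if fst (hd xs) = s then u xs else 0))"
proof -
  have "(\<Sum>s\<in>UNIV. h s *\<^sub>R (\<Sum>xs\<in>X. if fst (hd xs) = s then u xs else 0))
      = (\<Sum>xs\<in>X. \<Sum>s\<in>UNIV. if fst (hd xs) = s then h s *\<^sub>R u xs else 0)"
    by (subst sum.swap) (simp add: scaleR_sum_right if_distrib[of "\<lambda>v. h _ *\<^sub>R v"] cong: if_cong)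
  then show ?thesis
    by simp
qed

context mdp
begin

definition path_weight :: "('s \<Rightarrow> 'a \<Rightarrow> real) \<Rightarrow> ('s \<times> 'a) list \<Rightarrow> real" where
  "path_weight pol xs = (\<Prod>t<length xs. pol (fst (xs!t)) (snd (xs!t)))
         * (\<Prod>t<length xs - 1. P (fst (xs!t)) (snd (xs!t)) (fst (xs!Suc t)))"

text \<open>Along a path, path_return g unfolds to the truncated sum
  \<open>g(s\<^sub>0) + \<Sigma>\<^sub>t \<Pi>\<^sub>C(b\<^sub>c\<^sub>0\<^sub>,\<^sub>\<gamma>)\<^sub># \<dots> \<Pi>\<^sub>C(b\<^sub>c\<^sub>t\<^sub>-\<^sub>1\<^sub>,\<^sub>\<gamma>)\<^sub># g(s\<^sub>t)\<close> of the theorem (path_return_map_upt).\<close>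
primrec path_return :: "('s \<Rightarrow> nat \<Rightarrow> 'v::real_vector) \<Rightarrow> ('s \<times> 'a) list \<Rightarrow> nat \<Rightarrow> 'v" where
  "path_return g [] j = 0"
| "path_return g (x # xs) j = g (fst x) j + push (C (fst x) (snd x)) (path_return g xs) j"

definition path_sum :: "('s \<Rightarrow> 'a \<Rightarrow> real) \<Rightarrow> nat \<Rightarrow> 's \<Rightarrow> (('s \<times> 'a) list \<Rightarrow> 'v::real_vector) \<Rightarrow> 'v" where
  "path_sum pol n s F = (\<Sum>xs\<in>paths (Suc n). (if fst (hd xs) = s then path_weight pol xs else 0) *\<^sub>R F xs)"

lemma path_weight_single: "path_weight pol [(s, a)] = pol s a"
  by (simp add: path_weight_def)

lemma path_weight_Cons:
  assumes "xs \<noteq> []"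
  shows "path_weight pol ((s, a) # xs) = pol s a * P s a (fst (hd xs)) * path_weight pol xs"
proof -
  obtain m where m: "length xs = Suc m"
    using assms by (cases xs) auto
  have "path_weight pol ((s, a) # xs) = (pol s a * (\<Prod>t<length xs. pol (fst (xs!t)) (snd (xs!t))))
        * (P s a (fst (xs!0)) * (\<Prod>t<m. P (fst (xs!t)) (snd (xs!t)) (fst (xs!Suc t))))"
    unfolding path_weight_def using m
    by (simp only: length_Cons prod.lessThan_Suc_shift diff_Suc_1 nth_Cons_0 nth_Cons_Suc fst_conv snd_conv)
  also have "\<dots> = pol s a * P s a (fst (hd xs)) * path_weight pol xs"
    using m assms by (simp add: path_weight_def hd_conv_nth)
  finally show ?thesis .
qed

lemma path_sum_0: "path_sum pol 0 s F = (\<Sum>a\<in>UNIV. pol s a *\<^sub>R F [(s, a)])"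
proof -
  have paths_1: "paths (Suc 0) = (\<lambda>x. [x]) ` UNIV"
    by (auto simp: paths_def length_Suc_conv)
  have "path_sum pol 0 s F = (\<Sum>x\<in>UNIV. (if fst x = s then path_weight pol [x] else 0) *\<^sub>R F [x])"
    unfolding path_sum_def paths_1 by (subst sum.reindex) (auto simp: inj_on_def)
  also have "\<dots> = (\<Sum>a\<in>UNIV. pol s a *\<^sub>R F [(s, a)])"
    by (simp add: sum_UNIV_prod path_weight_single if_distrib[of "\<lambda>r. r *\<^sub>R _"] cong: if_cong)
      (subst sum.swap, simp)
  finally show ?thesis .
qed

lemma path_sum_Suc:
  "path_sum pol (Suc n) s F
    = (\<Sum>a\<in>UNIV. pol s a *\<^sub>R (\<Sum>s'\<in>UNIV. P s a s' *\<^sub>R path_sum pol n s' (\<lambda>xs. F ((s, a) # xs))))"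
proof -
  have "path_sum pol (Suc n) s F = (\<Sum>xs\<in>paths (Suc n). \<Sum>a\<in>UNIV.
      (pol s a * P s a (fst (hd xs)) * path_weight pol xs) *\<^sub>R F ((s, a) # xs))"
    unfolding path_sum_def sum_paths_Suc[of _ "Suc n"]
  proof (intro sum.cong refl)
    fix xs :: "('s \<times> 'a) list"
    assume "xs \<in> paths (Suc n)"
    then have "xs \<noteq> []"
      by (auto simp: paths_def)
    then show "(\<Sum>x\<in>UNIV. (if fst (hd (x # xs)) = s then path_weight pol (x # xs) else 0) *\<^sub>R F (x # xs))
        = (\<Sum>a\<in>UNIV. (pol s a * P s a (fst (hd xs)) * path_weight pol xs) *\<^sub>R F ((s, a) # xs))"
      by (simp add: sum_UNIV_prod path_weight_Cons if_distrib[of "\<lambda>r. r *\<^sub>R _"] cong: if_cong)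
        (subst sum.swap, simp)
  qed
  also have "\<dots> = (\<Sum>a\<in>UNIV. pol s a *\<^sub>R
      (\<Sum>xs\<in>paths (Suc n). P s a (fst (hd xs)) *\<^sub>R (path_weight pol xs *\<^sub>R F ((s, a) # xs))))"
    by (subst sum.swap) (simp add: scaleR_sum_right mult.assoc)
  also have "\<dots> = (\<Sum>a\<in>UNIV. pol s a *\<^sub>R (\<Sum>s'\<in>UNIV. P s a s' *\<^sub>R path_sum pol n s' (\<lambda>xs. F ((s, a) # xs))))"
    by (intro sum.cong refl) (subst sum_by_head[OF finite_paths],
        simp add: path_sum_def if_distrib[of "\<lambda>r. r *\<^sub>R _"] cong: if_cong)
  finally show ?thesis .
qed

lemma path_sum_const:
  assumes pol: "policy pol"
  shows "path_sum pol n s (\<lambda>xs. c) = c"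
proof (induction n arbitrary: s)
  case 0
  show ?case
    using pol by (simp add: path_sum_0 policy_def scaleR_sum_left[symmetric])
next
  case (Suc n)
  then show ?case
    using pol by (simp add: path_sum_Suc P_sum policy_def scaleR_sum_left[symmetric])
qed

lemma path_sum_return_0: "policy pol \<Longrightarrow> path_sum pol 0 s (\<lambda>xs. path_return g xs j) = g s j"
  by (simp add: path_sum_0 proj_push_def policy_def scaleR_sum_left[symmetric])

lemma path_sum_return_Suc:
  assumes pol: "policy pol"
  shows "path_sum pol (Suc n) s (\<lambda>xs. path_return g xs j)
    = g s j + state_bellman pol (\<lambda>s' k. path_sum pol n s' (\<lambda>xs. path_return g xs k)) s j"
proof -
  have push_path_sum: "path_sum pol n s' (\<lambda>xs. push c (H xs) j) = push c (\<lambda>k. path_sum pol n s' (\<lambda>xs. H xs k)) j"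
    for s' c and H :: "('s \<times> 'a) list \<Rightarrow> nat \<Rightarrow> 'v::real_vector"
    by (simp add: path_sum_def push_sum push_scaleR)
  have "path_sum pol n s' (\<lambda>xs. g s j + push (C s a) (path_return g xs) j)
      = g s j + push (C s a) (\<lambda>k. path_sum pol n s' (\<lambda>xs. path_return g xs k)) j" for s' a
    using path_sum_const[OF pol, of n s' "g s j"]
    by (simp add: path_sum_def scaleR_add_right sum.distrib push_path_sum[unfolded path_sum_def])
  then show ?thesis
    using pol
    by (simp add: path_sum_Suc state_bellman_def scaleR_add_right sum.distrib P_sum policy_def
        scaleR_sum_left[symmetric] push_sum push_scaleR)
qed

lemma path_return_map_upt:
  "path_return g (map x [m..<Suc (m + n)]) j = g (fst (x m)) j
    + (\<Sum>t<n. comp_ops N zmin zmax \<gamma> (map (\<lambda>k. C (fst (x k)) (snd (x k))) [m..<Suc (m + t)])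
                (g (fst (x (Suc (m + t))))) j)"
proof (induction n arbitrary: m j)
  case 0
  show ?case
    by (simp add: proj_push_def)
next
  case (Suc n)
  define c where "c = (\<lambda>k. C (fst (x k)) (snd (x k)))"
  have upt: "[m..<Suc (m + Suc t)] = m # [Suc m..<Suc (Suc m + t)]" for t
    by (simp add: upt_conv_Cons del: upt_Suc)
  have IH: "path_return g (map x [Suc m..<Suc (Suc m + n)]) = (\<lambda>k. g (fst (x (Suc m))) k
      + (\<Sum>t<n. comp_ops N zmin zmax \<gamma> (map c [Suc m..<Suc (Suc m + t)]) (g (fst (x (Suc (Suc m + t))))) k))"
    using Suc.IH[of "Suc m"] by (simp add: fun_eq_iff c_def del: upt_Suc)
  have "path_return g (map x [m..<Suc (m + Suc n)]) j
      = g (fst (x m)) j + push (c m) (path_return g (map x [Suc m..<Suc (Suc m + n)])) j"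
    by (simp only: upt list.map path_return.simps c_def)
  also have "\<dots> = g (fst (x m)) j + push (c m) (g (fst (x (Suc m)))) j
      + (\<Sum>t<n. push (c m) (comp_ops N zmin zmax \<gamma> (map c [Suc m..<Suc (Suc m + t)]) (g (fst (x (Suc (Suc m + t)))))) j)"
    unfolding IH by (simp add: push_add push_sum)
  also have "\<dots> = g (fst (x m)) j
      + (\<Sum>t<Suc n. comp_ops N zmin zmax \<gamma> (map c [m..<Suc (m + t)]) (g (fst (x (Suc (m + t))))) j)"
    by (simp only: sum.lessThan_Suc_shift upt) (simp add: upt_conv_Cons del: upt_Suc)
  finally show ?case
    by (simp only: c_def)
qed

lemma state_bellman_iterates_tendsto:
  fixes u :: "nat \<Rightarrow> 's \<Rightarrow> nat \<Rightarrow> 'v::real_normed_vector"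
  assumes pol: "policy pol"
    and u_Suc: "\<And>n s j. u (Suc n) s j = g s j + state_bellman pol (u n) s j"
    and W: "\<And>s j. W s j = g s j + state_bellman pol W s j"
    and mass0: "\<And>s. mass (\<lambda>j. u 0 s j - W s j) = 0"
    and j: "j \<in> {1..N}"
  shows "(\<lambda>n. u n s j) \<longlonglongrightarrow> W s j"
proof -
  define D where "D n = (\<lambda>s j. u n s j - W s j)" for n
  have "(\<lambda>n. D n s j) \<longlonglongrightarrow> 0"
  proof (rule zero_mass_iterates_tendsto_0[OF _ _ j])
    show "mass (D 0 s') = 0" for s'
      using mass0 by (simp add: D_def)
  next
    fix n B s'
    assume "\<And>y. mass (D n y) = 0" "\<And>y. cramer (D n y) \<le> B"
    then have "mass (state_bellman pol (D n) s') = 0 \<and> cramer (state_bellman pol (D n) s') \<le> \<gamma> * B"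
      by (rule state_bellman_contracts[OF pol])
    moreover have "D (Suc n) s' = state_bellman pol (D n) s'"
      using u_Suc W[of s'] by (simp add: D_def fun_eq_iff state_bellman_diff)
    ultimately show "mass (D (Suc n) s') = 0 \<and> cramer (D (Suc n) s') \<le> \<gamma> * B"
      by simp
  qed
  then show ?thesis
    by (simp add: D_def LIM_zero_iff)
qed

end

section \<open>The gradient of the fixed point\<close>

lemma grad_eq_derivative: "(f has_derivative f') (at \<theta>) \<Longrightarrow> grad f \<theta> = (\<chi> i. f' (axis i 1))"
  by (simp add: grad_def frechet_derivative_at[symmetric])

locale policy_gradient = mdp N zmin zmax \<gamma> C P
  for N zmin zmax \<gamma> and C :: "'s::finite \<Rightarrow> 'a::finite \<Rightarrow> real" and P +
  fixes \<pi> :: "real^'d \<Rightarrow> 's \<Rightarrow> 'a \<Rightarrow> real" and \<theta> :: "real^'d"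
  assumes policy_\<pi>: "\<And>\<phi>. policy (\<pi> \<phi>)"
    and \<pi>_differentiable: "\<And>s a \<phi>. (\<lambda>\<phi>'. \<pi> \<phi>' s a) differentiable (at \<phi>)"
    and eta_differentiable: "\<And>s a i \<phi>. i \<in> {1..N} \<Longrightarrow>
        (\<lambda>\<phi>'. eta_fix N zmin zmax \<gamma> C P (\<pi> \<phi>') s a i) differentiable (at \<phi>)"
begin

definition eta :: "real^'d \<Rightarrow> 's \<Rightarrow> 'a \<Rightarrow> nat \<Rightarrow> real" where
  "eta \<phi> = eta_fix N zmin zmax \<gamma> C P (\<pi> \<phi>)"

definition D_eta :: "'s \<Rightarrow> 'a \<Rightarrow> nat \<Rightarrow> real^'d \<Rightarrow> real" where
  "D_eta s a k = frechet_derivative (\<lambda>\<phi>. eta \<phi> s a k) (at \<theta>)"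

definition D_\<pi> :: "'s \<Rightarrow> 'a \<Rightarrow> real^'d \<Rightarrow> real" where
  "D_\<pi> s a = frechet_derivative (\<lambda>\<phi>. \<pi> \<phi> s a) (at \<theta>)"

definition grad_eta :: "'s \<Rightarrow> 'a \<Rightarrow> nat \<Rightarrow> real^'d" where
  "grad_eta s a j = grad (\<lambda>\<phi>. eta \<phi> s a j) \<theta>"

text \<open>The source term \<open>g\<^sub>N\<close>, and \<open>\<nabla>\<^sub>\<theta>\<eta>\<^sup>s\<close> expanded by the product rule
  (grad_eta_state_eq).\<close>
definition gN :: "'s \<Rightarrow> nat \<Rightarrow> real^'d" where
  "gN s j = (\<Sum>a\<in>UNIV. eta \<theta> s a j *\<^sub>R grad (\<lambda>\<phi>. \<pi> \<phi> s a) \<theta>)"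

definition grad_eta_state :: "'s \<Rightarrow> nat \<Rightarrow> real^'d" where
  "grad_eta_state s j = gN s j + (\<Sum>a\<in>UNIV. \<pi> \<theta> s a *\<^sub>R grad_eta s a j)"

lemma sum_\<pi>: "(\<Sum>a\<in>UNIV. \<pi> \<phi> s a) = 1"
  using policy_\<pi> by (simp add: policy_def)

lemma has_derivative_eta: "k \<in> {1..N} \<Longrightarrow> ((\<lambda>\<phi>. eta \<phi> s a k) has_derivative D_eta s a k) (at \<theta>)"
  unfolding D_eta_def eta_def using eta_differentiable frechet_derivative_works by blast

lemma has_derivative_\<pi>: "((\<lambda>\<phi>. \<pi> \<phi> s a) has_derivative D_\<pi> s a) (at \<theta>)"
  unfolding D_\<pi>_def using \<pi>_differentiable frechet_derivative_works by blast

lemma grad_eta_nth: "grad_eta s a j $ i = D_eta s a j (axis i 1)"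
  by (simp add: grad_eta_def grad_def D_eta_def)

lemma grad_\<pi>_nth: "grad (\<lambda>\<phi>. \<pi> \<phi> s a) \<theta> $ i = D_\<pi> s a (axis i 1)"
  by (simp add: grad_def D_\<pi>_def)

lemma dist_family_eta: "dist_family N (eta \<phi>)"
  unfolding eta_def by (rule eta_fix(1)[OF policy_\<pi>])

lemma eta_fixpoint: "eta \<phi> s a j = bellman (\<pi> \<phi>) (eta \<phi>) s a j"
  unfolding eta_def using eta_fix(2)[OF policy_\<pi>] by simp

text \<open>Total masses are constant in \<open>\<theta>\<close>, so their gradients vanish.\<close>
lemma mass_grad_eta: "mass (grad_eta s a) = 0"
proof -
  have "((\<lambda>\<phi>. \<Sum>j\<in>{1..N}. eta \<phi> s a j) has_derivative (\<lambda>h. \<Sum>j\<in>{1..N}. D_eta s a j h)) (at \<theta>)"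
    by (intro has_derivative_sum has_derivative_eta)
  moreover have "(\<lambda>\<phi>. \<Sum>j\<in>{1..N}. eta \<phi> s a j) = (\<lambda>\<phi>. 1)"
    using dist_family_eta by (auto simp: dist_family_def)
  ultimately have "(\<lambda>h. \<Sum>j\<in>{1..N}. D_eta s a j h) = (\<lambda>h. 0)"
    using has_derivative_const has_derivative_unique by metis
  then show ?thesis
    unfolding mass_def by (simp add: vec_eq_iff grad_eta_nth fun_eq_iff)
qed

lemma mass_gN: "mass (gN s) = 0"
proof -
  have "((\<lambda>\<phi>. \<Sum>a\<in>UNIV. \<pi> \<phi> s a) has_derivative (\<lambda>h. \<Sum>a\<in>UNIV. D_\<pi> s a h)) (at \<theta>)"
    by (intro has_derivative_sum has_derivative_\<pi>)
  moreover have "(\<lambda>\<phi>. \<Sum>a\<in>UNIV. \<pi> \<phi> s a) = (\<lambda>\<phi>. 1)"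
    by (simp add: sum_\<pi>)
  ultimately have D_\<pi>_sum: "(\<lambda>h. \<Sum>a\<in>UNIV. D_\<pi> s a h) = (\<lambda>h. 0)"
    using has_derivative_const has_derivative_unique by metis
  have "mass (gN s) = (\<Sum>a\<in>UNIV. (\<Sum>j\<in>{1..N}. eta \<theta> s a j) *\<^sub>R grad (\<lambda>\<phi>. \<pi> \<phi> s a) \<theta>)"
    unfolding mass_def gN_def by (subst sum.swap) (simp add: scaleR_sum_left)
  also have "\<dots> = (\<Sum>a\<in>UNIV. grad (\<lambda>\<phi>. \<pi> \<phi> s a) \<theta>)"
    using dist_family_eta by (simp add: dist_family_def)
  also have "\<dots> = 0"
    using D_\<pi>_sum by (simp add: vec_eq_iff grad_\<pi>_nth fun_eq_iff)
  finally show ?thesis .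
qed

lemma grad_eta_state_eq:
  assumes i: "i \<in> {1..N}"
  shows "grad (\<lambda>\<phi>. \<Sum>a\<in>UNIV. \<pi> \<phi> s a * eta \<phi> s a i) \<theta> = grad_eta_state s i"
proof -
  have "((\<lambda>\<phi>. \<Sum>a\<in>UNIV. \<pi> \<phi> s a * eta \<phi> s a i) has_derivative
       (\<lambda>h. \<Sum>a\<in>UNIV. \<pi> \<theta> s a * D_eta s a i h + D_\<pi> s a h * eta \<theta> s a i)) (at \<theta>)"
    using i by (auto intro!: has_derivative_sum has_derivative_mult has_derivative_eta has_derivative_\<pi>)
  from grad_eq_derivative[OF this] show ?thesis
    by (simp add: vec_eq_iff grad_eta_state_def gN_def grad_eta_nth grad_\<pi>_nth sum.distrib algebra_simps)
qed

lemma grad_eta_fixpoint: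
  "grad_eta s a j = push (C s a) (\<lambda>k. \<Sum>s'\<in>UNIV. P s a s' *\<^sub>R grad_eta_state s' k) j"
proof -
  define p where "p k = proj_dirac N zmin zmax (C s a + \<gamma> * z k) j" for k
  have "(\<lambda>\<phi>. eta \<phi> s a j)
      = (\<lambda>\<phi>. \<Sum>k\<in>{1..N}. p k * (\<Sum>s'\<in>UNIV. P s a s' * (\<Sum>a'\<in>UNIV. \<pi> \<phi> s' a' * eta \<phi> s' a' k)))"
    by (rule ext, subst eta_fixpoint) (simp add: bellman_def proj_push_def p_def)
  moreover have "((\<lambda>\<phi>. \<Sum>k\<in>{1..N}. p k * (\<Sum>s'\<in>UNIV. P s a s' * (\<Sum>a'\<in>UNIV. \<pi> \<phi> s' a' * eta \<phi> s' a' k)))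
     has_derivative (\<lambda>h. \<Sum>k\<in>{1..N}. p k * (\<Sum>s'\<in>UNIV. P s a s' *
        (\<Sum>a'\<in>UNIV. \<pi> \<theta> s' a' * D_eta s' a' k h + D_\<pi> s' a' h * eta \<theta> s' a' k)))) (at \<theta>)"
    by (auto intro!: has_derivative_sum has_derivative_mult_right has_derivative_mult
        has_derivative_eta has_derivative_\<pi>)
  ultimately show ?thesis
    unfolding grad_eta_def
    by (simp add: grad_eq_derivative vec_eq_iff proj_push_def p_def grad_eta_state_def gN_def
        grad_eta_nth grad_\<pi>_nth sum.distrib algebra_simps)
qed

lemma grad_eta_state_fixpoint:
  "grad_eta_state s j = gN s j + state_bellman (\<pi> \<theta>) grad_eta_state s j"
  unfolding state_bellman_def grad_eta_fixpoint[symmetric] by (rule grad_eta_state_def)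

lemma mass_grad_eta_state_minus_gN: "mass (\<lambda>j. grad_eta_state s j - gN s j) = 0"
  by (simp add: grad_eta_state_def mass_sum mass_scaleR mass_grad_eta)

lemma path_sum_return_tendsto:
  assumes i: "i \<in> {1..N}"
  shows "(\<lambda>n. path_sum (\<pi> \<theta>) n s (\<lambda>xs. path_return gN xs i)) \<longlonglongrightarrow> grad_eta_state s i"
proof (rule state_bellman_iterates_tendsto[OF policy_\<pi> _ grad_eta_state_fixpoint _ i])
  show "path_sum (\<pi> \<theta>) (Suc n) s' (\<lambda>xs. path_return gN xs j)
      = gN s' j + state_bellman (\<pi> \<theta>) (\<lambda>s k. path_sum (\<pi> \<theta>) n s (\<lambda>xs. path_return gN xs k)) s' j"
    for n s' j
    by (rule path_sum_return_Suc[OF policy_\<pi>])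
  have "mass (\<lambda>j. gN s' j - grad_eta_state s' j) = - mass (\<lambda>j. grad_eta_state s' j - gN s' j)" for s'
    by (simp add: mass_def sum_negf[symmetric])
  then show "mass (\<lambda>j. path_sum (\<pi> \<theta>) 0 s' (\<lambda>xs. path_return gN xs j) - grad_eta_state s' j) = 0" for s'
    by (simp add: path_sum_return_0[OF policy_\<pi>] mass_grad_eta_state_minus_gN)
qed

lemma norm_comp_ops_gN_le:
  assumes i: "i \<in> {1..N}"
  shows "norm (comp_ops N zmin zmax \<gamma> cs (gN s) i) \<le> 2 * (\<Sum>s'\<in>UNIV. cramer (gN s')) * \<gamma> ^ length cs"
proof -
  have "norm (comp_ops N zmin zmax \<gamma> cs (gN s) i) \<le> 2 * cramer (comp_ops N zmin zmax \<gamma> cs (gN s))"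
    using cramer_comp_ops_le[OF mass_gN] by (intro norm_le_cramer i) blast
  also have "\<dots> \<le> 2 * (\<gamma> ^ length cs * cramer (gN s))"
    using cramer_comp_ops_le[OF mass_gN] by simp
  also have "\<dots> \<le> 2 * (\<gamma> ^ length cs * (\<Sum>s'\<in>UNIV. cramer (gN s')))"
    using gamma_nonneg by (intro mult_left_mono member_le_sum) (auto simp: cramer_nonneg)
  finally show ?thesis
    by (simp add: mult_ac)
qed

end

section \<open>Expectation over trajectories\<close>

locale trajectory = policy_gradient N zmin zmax \<gamma> C P \<pi> \<theta>
  for N zmin zmax \<gamma> and C :: "'s::finite \<Rightarrow> 'a::finite \<Rightarrow> real" and P \<pi> and \<theta> :: "real^'d" +
  fixes M :: "'w measure" and S :: "nat \<Rightarrow> 'w \<Rightarrow> 's" and A :: "nat \<Rightarrow> 'w \<Rightarrow> 'a" and s\<^sub>0 :: 's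
  assumes prob_space_M: "prob_space M"
    and S_measurable: "\<And>t. S t \<in> measurable M (count_space UNIV)"
    and A_measurable: "\<And>t. A t \<in> measurable M (count_space UNIV)"
    and trajectory_law: "\<And>n (ss :: nat \<Rightarrow> 's) (as :: nat \<Rightarrow> 'a).
        measure M {\<omega> \<in> space M. \<forall>t\<le>n. S t \<omega> = ss t \<and> A t \<omega> = as t}
          = (if ss 0 = s\<^sub>0 then 1 else 0) * (\<Prod>t\<in>{..n}. \<pi> \<theta> (ss t) (as t))
            * (\<Prod>t\<in>{..<n}. P (ss t) (as t) (ss (Suc t)))"
begin

definition prefix :: "nat \<Rightarrow> 'w \<Rightarrow> ('s \<times> 'a) list" where
  "prefix n \<omega> = map (\<lambda>t. (S t \<omega>, A t \<omega>)) [0..<Suc n]"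

definition cylinder :: "nat \<Rightarrow> ('s \<times> 'a) list \<Rightarrow> 'w set" where
  "cylinder n xs = {\<omega> \<in> space M. \<forall>t\<le>n. S t \<omega> = fst (xs!t) \<and> A t \<omega> = snd (xs!t)}"

definition return_term :: "nat \<Rightarrow> nat \<Rightarrow> 'w \<Rightarrow> real^'d" where
  "return_term i t \<omega> = comp_ops N zmin zmax \<gamma> (map (\<lambda>k. C (S k \<omega>) (A k \<omega>)) [0..<Suc t]) (gN (S (Suc t) \<omega>)) i"

lemma prefix_in_paths: "prefix n \<omega> \<in> paths (Suc n)"
  by (simp add: prefix_def paths_def)

lemma mem_cylinder_iff:
  assumes "\<omega> \<in> space M" "xs \<in> paths (Suc n)"
  shows "\<omega> \<in> cylinder n xs \<longleftrightarrow> xs = prefix n \<omega>"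
proof
  assume "\<omega> \<in> cylinder n xs"
  then show "xs = prefix n \<omega>"
    using assms(2)
    by (intro nth_equalityI)
      (auto simp: cylinder_def prefix_def paths_def nth_map_upt less_Suc_eq_le prod_eq_iff simp del: upt_Suc)
qed (use assms(1) in \<open>auto simp: cylinder_def prefix_def nth_map_upt simp del: upt_Suc\<close>)

lemma sets_cylinder: "cylinder n xs \<in> sets M"
  using S_measurable A_measurable unfolding cylinder_def by measurable

lemma measure_cylinder:
  assumes "xs \<in> paths (Suc n)"
  shows "measure M (cylinder n xs) = (if fst (hd xs) = s\<^sub>0 then path_weight (\<pi> \<theta>) xs else 0)"
proof -
  have len: "length xs = Suc n"
    using assms by (simp add: paths_def)
  then have "hd xs = xs ! 0"
    by (intro hd_conv_nth) auto
  then show ?thesis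
    unfolding cylinder_def trajectory_law path_weight_def len using lessThan_Suc_atMost[of n] by simp
qed

lemma prefix_functional_eq:
  fixes F :: "('s \<times> 'a) list \<Rightarrow> 'b::real_vector"
  assumes "\<omega> \<in> space M"
  shows "F (prefix n \<omega>) = (\<Sum>xs\<in>paths (Suc n). indicator (cylinder n xs) \<omega> *\<^sub>R F xs)"
proof -
  have "(\<Sum>xs\<in>paths (Suc n). indicator (cylinder n xs) \<omega> *\<^sub>R F xs)
      = (\<Sum>xs\<in>paths (Suc n). if xs = prefix n \<omega> then F xs else 0)"
    using assms by (intro sum.cong refl) (auto simp: indicator_def mem_cylinder_iff)
  then show ?thesis
    using prefix_in_paths[of n \<omega>] by (simp add: finite_paths)
qed

lemma borel_measurable_prefix_functional:
  fixes F :: "('s \<times> 'a) list \<Rightarrow> 'b::{banach, second_countable_topology}"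
  shows "(\<lambda>\<omega>. F (prefix n \<omega>)) \<in> borel_measurable M"
proof -
  have "(\<lambda>\<omega>. \<Sum>xs\<in>paths (Suc n). indicator (cylinder n xs) \<omega> *\<^sub>R F xs) \<in> borel_measurable M"
    using sets_cylinder by measurable
  then show ?thesis
    by (subst measurable_cong[OF prefix_functional_eq]) auto
qed

lemma integral_prefix_functional:
  fixes F :: "('s \<times> 'a) list \<Rightarrow> 'b::{banach, second_countable_topology}"
  shows "integral\<^sup>L M (\<lambda>\<omega>. F (prefix n \<omega>)) = path_sum (\<pi> \<theta>) n s\<^sub>0 F"
proof -
  interpret prob_space M
    by (rule prob_space_M)
  have integrable: "integrable M (indicator (cylinder n xs) :: 'w \<Rightarrow> real)" for xs
    using sets_cylinder by (auto intro!: integrable_real_indicator simp: less_top[symmetric])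
  have "integral\<^sup>L M (\<lambda>\<omega>. F (prefix n \<omega>))
      = integral\<^sup>L M (\<lambda>\<omega>. \<Sum>xs\<in>paths (Suc n). indicator (cylinder n xs) \<omega> *\<^sub>R F xs)"
    by (intro Bochner_Integration.integral_cong refl prefix_functional_eq)
  also have "\<dots> = (\<Sum>xs\<in>paths (Suc n). measure M (cylinder n xs) *\<^sub>R F xs)"
    using integrable sets.sets_into_space[OF sets_cylinder]
    by (simp add: Bochner_Integration.integral_sum integrable_scaleR_left Int_absorb2)
  also have "\<dots> = path_sum (\<pi> \<theta>) n s\<^sub>0 F"
    unfolding path_sum_def by (intro sum.cong refl) (simp add: measure_cylinder)
  finally show ?thesis .
qed

lemma path_return_prefix:
  "path_return gN (prefix n \<omega>) i = gN (S 0 \<omega>) i + (\<Sum>t<n. return_term i t \<omega>)"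
  using path_return_map_upt[of gN "\<lambda>t. (S t \<omega>, A t \<omega>)" 0 n i]
  by (simp add: prefix_def return_term_def del: upt_Suc)

definition return_bound :: "nat \<Rightarrow> real" where
  "return_bound t = 2 * (\<Sum>s\<in>UNIV. cramer (gN s)) * \<gamma> ^ Suc t"

lemma norm_return_term_le:
  assumes "i \<in> {1..N}"
  shows "norm (return_term i t \<omega>) \<le> return_bound t"
  using norm_comp_ops_gN_le[OF assms, of "map (\<lambda>k. C (S k \<omega>) (A k \<omega>)) [0..<Suc t]" "S (Suc t) \<omega>"]
  by (simp add: return_term_def return_bound_def del: upt_Suc)

lemma return_bound_nonneg: "0 \<le> return_bound t"
  unfolding return_bound_def using gamma_nonneg by (intro mult_nonneg_nonneg sum_nonneg cramer_nonneg) auto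

lemma summable_return_bound: "summable return_bound"
  unfolding return_bound_def using gamma_nonneg gamma_less_1
  by (intro summable_mult summable_geometric) auto

lemma truncated_return_tendsto:
  assumes "i \<in> {1..N}"
  shows "(\<lambda>n. gN (S 0 \<omega>) i + (\<Sum>t<n. return_term i t \<omega>)) \<longlonglongrightarrow> gN (S 0 \<omega>) i + (\<Sum>t. return_term i t \<omega>)"
proof -
  have "summable (\<lambda>t. return_term i t \<omega>)"
    by (rule summable_comparison_test'[OF summable_return_bound]) (rule norm_return_term_le[OF assms])
  then show ?thesis
    by (intro tendsto_add tendsto_const summable_LIMSEQ)
qed

lemma norm_truncated_return_le:
  assumes "i \<in> {1..N}"
  shows "norm (gN (S 0 \<omega>) i + (\<Sum>t<n. return_term i t \<omega>))
    \<le> (\<Sum>s\<in>UNIV. norm (gN s i)) + (\<Sum>t. return_bound t)"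
proof -
  have "norm (gN (S 0 \<omega>) i + (\<Sum>t<n. return_term i t \<omega>))
      \<le> norm (gN (S 0 \<omega>) i) + norm (\<Sum>t<n. return_term i t \<omega>)"
    by (rule norm_triangle_ineq)
  also have "norm (\<Sum>t<n. return_term i t \<omega>) \<le> (\<Sum>t<n. return_bound t)"
    using norm_return_term_le[OF assms] by (intro order_trans[OF norm_sum sum_mono])
  also have "(\<Sum>t<n. return_bound t) \<le> (\<Sum>t. return_bound t)"
    using summable_return_bound return_bound_nonneg by (intro sum_le_suminf) auto
  also have "norm (gN (S 0 \<omega>) i) \<le> (\<Sum>s\<in>UNIV. norm (gN s i))"
    by (rule member_le_sum) auto
  finally show ?thesis
    by simp
qed

lemma integral_return:
  assumes i: "i \<in> {1..N}"
  shows "integral\<^sup>L M (\<lambda>\<omega>. gN (S 0 \<omega>) i + (\<Sum>t. return_term i t \<omega>)) = grad_eta_state s\<^sub>0 i"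
proof -
  interpret prob_space M
    by (rule prob_space_M)
  define X where "X n \<omega> = gN (S 0 \<omega>) i + (\<Sum>t<n. return_term i t \<omega>)" for n \<omega>
  have X_prefix: "X n = (\<lambda>\<omega>. path_return gN (prefix n \<omega>) i)" for n
    by (simp add: X_def fun_eq_iff path_return_prefix)
  have X_measurable: "X n \<in> borel_measurable M" for n
    unfolding X_prefix by (rule borel_measurable_prefix_functional)
  have lim: "(\<lambda>n. X n \<omega>) \<longlonglongrightarrow> gN (S 0 \<omega>) i + (\<Sum>t. return_term i t \<omega>)" for \<omega>
    unfolding X_def by (rule truncated_return_tendsto[OF i])
  have "(\<lambda>n. integral\<^sup>L M (X n)) \<longlonglongrightarrow> integral\<^sup>L M (\<lambda>\<omega>. gN (S 0 \<omega>) i + (\<Sum>t. return_term i t \<omega>))"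
  proof (rule integral_dominated_convergence
      [where w="\<lambda>_. (\<Sum>s\<in>UNIV. norm (gN s i)) + (\<Sum>t. return_bound t)"])
    show "(\<lambda>\<omega>. gN (S 0 \<omega>) i + (\<Sum>t. return_term i t \<omega>)) \<in> borel_measurable M"
      by (rule borel_measurable_LIMSEQ_metric[OF X_measurable lim])
  qed (use X_measurable lim norm_truncated_return_le[OF i] in \<open>auto simp: X_def\<close>)
  moreover have "(\<lambda>n. integral\<^sup>L M (X n)) \<longlonglongrightarrow> grad_eta_state s\<^sub>0 i"
    using path_sum_return_tendsto[OF i]
    by (simp add: X_prefix integral_prefix_functional[of "\<lambda>xs. path_return gN xs i"])
  ultimately show ?thesis
    using LIMSEQ_unique by blast
qed

end

theorem theorem4:
  fixes N :: nat and zmin zmax \<gamma> :: real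
    and C :: "'s::finite \<Rightarrow> 'a::finite \<Rightarrow> real"
    and P :: "'s \<Rightarrow> 'a \<Rightarrow> 's \<Rightarrow> real"
    and \<pi> :: "real^'d \<Rightarrow> 's \<Rightarrow> 'a \<Rightarrow> real"
    and \<theta> :: "real^'d" and s :: 's
    and M :: "'w measure" and S :: "nat \<Rightarrow> 'w \<Rightarrow> 's" and A :: "nat \<Rightarrow> 'w \<Rightarrow> 'a"
  assumes N: "N \<ge> 2" and z: "zmin < zmax"
    and \<gamma>: "0 \<le> \<gamma>" "\<gamma> < 1"
    and P_nonneg: "\<And>s a s'. 0 \<le> P s a s'" and P_sum: "\<And>s a. (\<Sum>s'\<in>UNIV. P s a s') = 1"
    and pi_nonneg: "\<And>\<phi> s a. 0 \<le> \<pi> \<phi> s a" and pi_sum: "\<And>\<phi> s. (\<Sum>a\<in>UNIV. \<pi> \<phi> s a) = 1"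
    and pi_diff: "\<And>s a \<phi>. (\<lambda>\<phi>'. \<pi> \<phi>' s a) differentiable (at \<phi>)"
    and eta_diff: "\<And>s a i \<phi>. i \<in> {1..N} \<Longrightarrow>
        (\<lambda>\<phi>'. eta_fix N zmin zmax \<gamma> C P (\<pi> \<phi>') s a i) differentiable (at \<phi>)"
    and M: "prob_space M"
    and S_meas: "\<And>t. S t \<in> measurable M (count_space UNIV)"
    and A_meas: "\<And>t. A t \<in> measurable M (count_space UNIV)"
    and traj_law: "\<And>n (ss :: nat \<Rightarrow> 's) (as :: nat \<Rightarrow> 'a).
        measure M {\<omega> \<in> space M. \<forall>t\<le>n. S t \<omega> = ss t \<and> A t \<omega> = as t}
          = (if ss 0 = s then 1 else 0) * (\<Prod>t\<in>{..n}. \<pi> \<theta> (ss t) (as t))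
            * (\<Prod>t\<in>{..<n}. P (ss t) (as t) (ss (Suc t)))"
  shows "\<forall>i\<in>{1..N}.
    grad (\<lambda>\<phi>. \<Sum>a\<in>UNIV. \<pi> \<phi> s a * eta_fix N zmin zmax \<gamma> C P (\<pi> \<phi>) s a i) \<theta>
    = (let g = (\<lambda>s' j. \<Sum>a\<in>UNIV. eta_fix N zmin zmax \<gamma> C P (\<pi> \<theta>) s' a j *\<^sub>R grad (\<lambda>\<phi>. \<pi> \<phi> s' a) \<theta>)
       in integral\<^sup>L M (\<lambda>\<omega>. g (S 0 \<omega>) i
            + (\<Sum>t. comp_ops N zmin zmax \<gamma> (map (\<lambda>k. C (S k \<omega>) (A k \<omega>)) [0..<Suc t])
                       (g (S (Suc t) \<omega>)) i)))"
proof -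
  interpret trajectory N zmin zmax \<gamma> C P \<pi> \<theta> M S A s
    using N z \<gamma> P_nonneg P_sum pi_nonneg pi_sum pi_diff eta_diff M S_meas A_meas traj_law
    by (simp add: trajectory_def trajectory_axioms_def policy_gradient_def policy_gradient_axioms_def
        mdp_def mdp_axioms_def grid_def policy_def)
  have gN: "(\<lambda>s' j. \<Sum>a\<in>UNIV. eta_fix N zmin zmax \<gamma> C P (\<pi> \<theta>) s' a j *\<^sub>R grad (\<lambda>\<phi>. \<pi> \<phi> s' a) \<theta>) = gN"
    by (simp add: fun_eq_iff gN_def eta_def)
  show ?thesis
    unfolding Let_def gN
  proof
    fix i assume "i \<in> {1..N}"
    then show "grad (\<lambda>\<phi>. \<Sum>a\<in>UNIV. \<pi> \<phi> s a * eta_fix N zmin zmax \<gamma> C P (\<pi> \<phi>) s a i) \<theta>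
      = integral\<^sup>L M (\<lambda>\<omega>. gN (S 0 \<omega>) i + (\<Sum>t. comp_ops N zmin zmax \<gamma> (map (\<lambda>k. C (S k \<omega>) (A k \<omega>)) [0..<Suc t])
                       (gN (S (Suc t) \<omega>)) i))"
      using grad_eta_state_eq[unfolded eta_def] integral_return by (simp only: return_term_def)
  qed
qed

end
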